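(* Let $h$ be a hospital and define $\mathrm{Ch}_h:2^{X_h}\to2^{X_h}$ as follows: given $X'\subseteq X_h$, sort $X'$ in non-increasing order of $f_h(x)/x_W$ (ties broken by a fixed order) as $x^{(1)},\dots,x^{(|X'|)}$; start with $Y=\emptyset$ and for $i=1,\dots,|X'|$, add $x^{(i)}$ to $Y$ if $w_h(Y)<B_h$; return $Y$. Then $\mathrm{Ch}_h$ satisfies SUB, IRC and COM.
   Context: Hospital $h$ has a finite set $X_h$ of contracts $x$ with wages $x_W$, $0<x_W\le B_h$, where $B_h>0$ is its budget, and an additive utility $f_h$ with $f_h(x)>0$, $f_h(Y)=\sum_{x\in Y}f_h(x)$. $w_h(Y)=\sum_{x\in Y}x_W$. For $\mathrm{Ch}_h$ with $\mathrm{Ch}_h(Y)\subseteq Y$: SUB means for all $Y''\subseteq Y'\subseteq X_h$, $Y''\setminus\mathrm{Ch}_h(Y'')\subseteq Y'\setminus\mathrm{Ch}_h(Y')$; IRC means for $Y'\subseteq X_h$, $Y''\subseteq X_h\setminus Y'$, if $\mathrm{Ch}_h(Y'\cup Y'')\subseteq Y'$ then $\mathrm{Ch}_h(Y')=\mathrm{Ch}_h(Y'\cup Y'')$; COM means for all $Y''\subseteq Y'\subseteq X_h$ with $w_h(Y'')\le\max\{B_h,w_h(\mathrm{Ch}_h(Y'))\}$, $f_h(\mathrm{Ch}_h(Y'))\ge f_h(Y'')$. *)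

theory Defs
  imports Complex_Main
begin

definition wtot :: "('a \<Rightarrow> real) \<Rightarrow> 'a set \<Rightarrow> real" where
  "wtot wage Y = (\<Sum>x\<in>Y. wage x)"

definition futil :: "('a \<Rightarrow> real) \<Rightarrow> 'a set \<Rightarrow> real" where
  "futil f Y = (\<Sum>x\<in>Y. f x)"

text \<open>Strict priority: x comes before y if its ratio f/wage is strictly larger,
  or the ratios are equal and x precedes y in the fixed tie-breaking order
  (given by an injective ranking tb, smaller rank first).\<close>
definition prec :: "('a \<Rightarrow> real) \<Rightarrow> ('a \<Rightarrow> real) \<Rightarrow> ('a \<Rightarrow> nat) \<Rightarrow> 'a \<Rightarrow> 'a \<Rightarrow> bool" where
  "prec f wage tb x y \<longleftrightarrow>
     f x / wage x > f y / wage y \<or> (f x / wage x = f y / wage y \<and> tb x < tb y)"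

definition sorted_contracts ::
  "('a \<Rightarrow> real) \<Rightarrow> ('a \<Rightarrow> real) \<Rightarrow> ('a \<Rightarrow> nat) \<Rightarrow> 'a set \<Rightarrow> 'a list" where
  "sorted_contracts f wage tb X' =
     (THE xs. set xs = X' \<and> distinct xs \<and> sorted_wrt (prec f wage tb) xs)"

definition greedy_step :: "real \<Rightarrow> ('a \<Rightarrow> real) \<Rightarrow> 'a set \<Rightarrow> 'a \<Rightarrow> 'a set" where
  "greedy_step B wage Y x = (if wtot wage Y < B then insert x Y else Y)"

definition Ch_greedy ::
  "real \<Rightarrow> ('a \<Rightarrow> real) \<Rightarrow> ('a \<Rightarrow> real) \<Rightarrow> ('a \<Rightarrow> nat) \<Rightarrow> 'a set \<Rightarrow> 'a set" where
  "Ch_greedy B f wage tb X' = foldl (greedy_step B wage) {} (sorted_contracts f wage tb X')"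

definition SUB :: "'a set \<Rightarrow> ('a set \<Rightarrow> 'a set) \<Rightarrow> bool" where
  "SUB X Ch \<longleftrightarrow> (\<forall>Y' Y''. Y'' \<subseteq> Y' \<and> Y' \<subseteq> X \<longrightarrow> Y'' - Ch Y'' \<subseteq> Y' - Ch Y')"

definition IRC :: "'a set \<Rightarrow> ('a set \<Rightarrow> 'a set) \<Rightarrow> bool" where
  "IRC X Ch \<longleftrightarrow> (\<forall>Y' Y''. Y' \<subseteq> X \<and> Y'' \<subseteq> X - Y' \<and> Ch (Y' \<union> Y'') \<subseteq> Y'
                      \<longrightarrow> Ch Y' = Ch (Y' \<union> Y''))"

definition COM :: "'a set \<Rightarrow> real \<Rightarrow> ('a \<Rightarrow> real) \<Rightarrow> ('a \<Rightarrow> real) \<Rightarrow> ('a set \<Rightarrow> 'a set) \<Rightarrow> bool" where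
  "COM X B f wage Ch \<longleftrightarrow> (\<forall>Y' Y''. Y'' \<subseteq> Y' \<and> Y' \<subseteq> X \<and>
       wtot wage Y'' \<le> max B (wtot wage (Ch Y')) \<longrightarrow> futil f (Ch Y') \<ge> futil f Y'')"

end

theory Submission
  imports Defs "HOL-Library.Product_Lexorder"
begin

text \<open>The greedy loop takes a contract exactly when the contracts ranked before it weigh
  less than the budget (greedy_choice).  Enlarging the menu only adds predecessors, which gives
  substitutability.  Every chosen contract is ranked before every rejected one, and the choice
  either takes everything or exhausts the budget; this gives irrelevance of rejected contracts.
  For comparability, a ratio threshold separates chosen from rejected contracts, so a subset of
  no larger total wage has no larger utility: the exchange argument for the fractional
  knapsack.\<close>

definition greedy_choice :: "real \<Rightarrow> ('a \<Rightarrow> real) \<Rightarrow> ('a \<Rightarrow> 'a \<Rightarrow> bool) \<Rightarrow> 'a set \<Rightarrow> 'a set" where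
  "greedy_choice B wage R S = {x \<in> S. wtot wage {y \<in> S. R y x} < B}"

lemma wtot_mono:
  assumes "finite T" "S \<subseteq> T" "\<And>x. x \<in> T \<Longrightarrow> 0 \<le> wage x"
  shows "wtot wage S \<le> wtot wage T"
  unfolding wtot_def using assms by (intro sum_mono2) auto

lemma prec_asym: "prec f wage tb x y \<Longrightarrow> \<not> prec f wage tb y x"
  unfolding prec_def by auto

lemma transp_prec: "transp (prec f wage tb)"
  unfolding prec_def by (rule transpI) auto

lemma prec_total_on:
  "inj_on tb S \<Longrightarrow> x \<in> S \<Longrightarrow> y \<in> S \<Longrightarrow> x \<noteq> y \<Longrightarrow> prec f wage tb x y \<or> prec f wage tb y x"
  unfolding prec_def by (metis inj_on_def linorder_neqE linorder_neqE_nat)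

lemma prec_ratio_le: "prec f wage tb x y \<Longrightarrow> f y / wage y \<le> f x / wage x"
  unfolding prec_def by auto

lemma sorted_wrt_asym_unique:
  assumes "\<And>x y. R x y \<Longrightarrow> \<not> R y x"
  shows "sorted_wrt R xs \<Longrightarrow> sorted_wrt R ys \<Longrightarrow> distinct xs \<Longrightarrow> distinct ys
    \<Longrightarrow> set xs = set ys \<Longrightarrow> xs = ys"
proof (induction xs arbitrary: ys)
  case Nil
  then show ?case by simp
next
  case (Cons a xs')
  then obtain b ys' where ys: "ys = b # ys'" by (cases ys) auto
  have "a = b"
  proof (rule ccontr)
    assume "a \<noteq> b"
    then have "b \<in> set xs'" "a \<in> set ys'" using Cons.prems ys by auto
    then have "R a b" "R b a" using Cons.prems ys by auto
    then show False using assms by blast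
  qed
  then have "set xs' = set ys'" using Cons.prems ys by auto
  then show ?case using Cons ys \<open>a = b\<close> by auto
qed

lemma sorted_wrt_prec_exists:
  assumes "finite S" "inj_on tb S"
  shows "\<exists>xs. set xs = S \<and> distinct xs \<and> sorted_wrt (prec f wage tb) xs"
proof -
  obtain ys where ys: "set ys = S" "distinct ys" using finite_distinct_list[OF assms(1)] by blast
  define key where "key = (\<lambda>x. (- (f x / wage x), tb x))"
  define xs where "xs = sort_key key ys"
  have xs: "set xs = S" "distinct xs" using ys by (auto simp: xs_def)
  have "inj_on key S" using assms(2) unfolding key_def inj_on_def by auto
  then have "sorted_wrt (<) (map key xs)"
    using xs by (simp add: xs_def sorted_sort_key strict_sorted_iff distinct_map)
  then have "sorted_wrt (prec f wage tb) xs"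
    by (auto simp: sorted_wrt_map key_def prec_def elim!: sorted_wrt_mono_rel[rotated])
  then show ?thesis using xs by blast
qed

lemma sorted_contracts:
  assumes "finite S" "inj_on tb S"
  shows "set (sorted_contracts f wage tb S) = S" "distinct (sorted_contracts f wage tb S)"
    "sorted_wrt (prec f wage tb) (sorted_contracts f wage tb S)"
proof -
  have "\<exists>!xs. set xs = S \<and> distinct xs \<and> sorted_wrt (prec f wage tb) xs"
    using sorted_wrt_prec_exists[OF assms]
      sorted_wrt_asym_unique[of "prec f wage tb", OF prec_asym] by metis
  from theI'[OF this] show "set (sorted_contracts f wage tb S) = S"
    "distinct (sorted_contracts f wage tb S)"
    "sorted_wrt (prec f wage tb) (sorted_contracts f wage tb S)"
    unfolding sorted_contracts_def by blast+
qed

lemma greedy_choice_insert_last: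
  assumes "a \<notin> S" "\<And>y. y \<in> S \<Longrightarrow> R y a" "\<And>x y. R x y \<Longrightarrow> \<not> R y x"
  shows "greedy_choice B wage R (insert a S) =
    (if wtot wage S < B then insert a (greedy_choice B wage R S) else greedy_choice B wage R S)"
proof -
  have "{y \<in> insert a S. R y x} = {y \<in> S. R y x}" if "x \<in> S" for x
    using assms that by blast
  moreover have "{y \<in> insert a S. R y a} = S" using assms by blast
  ultimately show ?thesis unfolding greedy_choice_def using assms(1) by auto
qed

lemma foldl_greedy_step_sorted:
  assumes "sorted_wrt R xs" "distinct xs" "\<And>x y. R x y \<Longrightarrow> \<not> R y x"
    and "\<And>x. x \<in> set xs \<Longrightarrow> 0 \<le> wage x"
  shows "foldl (greedy_step B wage) {} xs = greedy_choice B wage R (set xs)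
    \<and> (greedy_choice B wage R (set xs) = set xs \<or> B \<le> wtot wage (greedy_choice B wage R (set xs)))"
  using assms(1,2,4)
proof (induction xs rule: rev_induct)
  case Nil
  then show ?case by (simp add: greedy_choice_def)
next
  case (snoc a xs)
  let ?G = "greedy_choice B wage R (set xs)"
  have IH: "foldl (greedy_step B wage) {} xs = ?G" "?G = set xs \<or> B \<le> wtot wage ?G"
    using snoc by (auto simp: sorted_wrt_append)
  have "wtot wage ?G \<le> wtot wage (set xs)"
    using snoc.prems(3) by (intro wtot_mono) (auto simp: greedy_choice_def)
  then have "wtot wage ?G < B \<longleftrightarrow> wtot wage (set xs) < B" using IH(2) by auto
  moreover have "greedy_choice B wage R (set (xs @ [a])) =
      (if wtot wage (set xs) < B then insert a ?G else ?G)"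
    using snoc.prems(1,2) assms(3) by (simp add: greedy_choice_insert_last sorted_wrt_append)
  moreover have "foldl (greedy_step B wage) {} (xs @ [a]) =
      (if wtot wage ?G < B then insert a ?G else ?G)"
    by (simp only: foldl_append foldl.simps IH(1) greedy_step_def)
  ultimately show ?case using IH(2) by (cases "wtot wage (set xs) < B") auto
qed

lemma Ch_greedy_eq_greedy_choice:
  assumes "finite S" "inj_on tb S" "\<And>x. x \<in> S \<Longrightarrow> 0 \<le> wage x"
  shows "Ch_greedy B f wage tb S = greedy_choice B wage (prec f wage tb) S"
    and "greedy_choice B wage (prec f wage tb) S = S
      \<or> B \<le> wtot wage (greedy_choice B wage (prec f wage tb) S)"
  using foldl_greedy_step_sorted[OF sorted_contracts(3,2)[OF assms(1,2)] prec_asym,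
      where wage = wage and B = B] assms(3)
  unfolding Ch_greedy_def sorted_contracts(1)[OF assms(1,2)] by blast+

lemma greedy_choice_rejected_mono:
  assumes "finite T" "S \<subseteq> T" "\<And>x. x \<in> T \<Longrightarrow> 0 \<le> wage x"
  shows "S - greedy_choice B wage R S \<subseteq> T - greedy_choice B wage R T"
proof
  fix x assume x: "x \<in> S - greedy_choice B wage R S"
  have "wtot wage {y \<in> S. R y x} \<le> wtot wage {y \<in> T. R y x}"
    using assms by (intro wtot_mono) auto
  then show "x \<in> T - greedy_choice B wage R T"
    using x assms(2) by (auto simp: greedy_choice_def)
qed

lemma greedy_choice_chosen_before_rejected:
  assumes "finite S" "\<And>x. x \<in> S \<Longrightarrow> 0 \<le> wage x" "transp R"
    and total: "\<And>x y. x \<in> S \<Longrightarrow> y \<in> S \<Longrightarrow> x \<noteq> y \<Longrightarrow> R x y \<or> R y x"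
    and c: "c \<in> greedy_choice B wage R S" and y: "y \<in> S - greedy_choice B wage R S"
  shows "R c y"
proof (rule ccontr)
  assume "\<not> R c y"
  then have "R y c" using total c y by (auto simp: greedy_choice_def)
  then have "{z \<in> S. R z y} \<subseteq> {z \<in> S. R z c}" using \<open>transp R\<close> by (auto dest: transpD)
  then have "wtot wage {z \<in> S. R z y} \<le> wtot wage {z \<in> S. R z c}"
    using assms(1,2) by (intro wtot_mono) auto
  then show False using c y by (auto simp: greedy_choice_def)
qed

lemma greedy_choice_irrelevance:
  assumes "finite U" "Y \<subseteq> U" "\<And>x. x \<in> U \<Longrightarrow> 0 \<le> wage x" "transp R"
    and total: "\<And>x y. x \<in> U \<Longrightarrow> y \<in> U \<Longrightarrow> x \<noteq> y \<Longrightarrow> R x y \<or> R y x"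
    and chosen: "greedy_choice B wage R U \<subseteq> Y"
    and saturated: "greedy_choice B wage R U = U \<or> B \<le> wtot wage (greedy_choice B wage R U)"
  shows "greedy_choice B wage R Y = greedy_choice B wage R U"
proof
  show "greedy_choice B wage R U \<subseteq> greedy_choice B wage R Y"
  proof
    fix c assume c: "c \<in> greedy_choice B wage R U"
    have "wtot wage {y \<in> Y. R y c} \<le> wtot wage {y \<in> U. R y c}"
      using assms(1-3) by (intro wtot_mono) auto
    then show "c \<in> greedy_choice B wage R Y" using c chosen by (auto simp: greedy_choice_def)
  qed
next
  show "greedy_choice B wage R Y \<subseteq> greedy_choice B wage R U"
  proof (rule subsetI, rule ccontr)
    fix x assume x: "x \<in> greedy_choice B wage R Y" and "x \<notin> greedy_choice B wage R U"
    then have rejected: "x \<in> U - greedy_choice B wage R U"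
      using assms(2) by (auto simp: greedy_choice_def)
    then have "B \<le> wtot wage (greedy_choice B wage R U)" using saturated by blast
    moreover have "greedy_choice B wage R U \<subseteq> {y \<in> Y. R y x}"
      using greedy_choice_chosen_before_rejected[OF assms(1,3,4) total _ rejected] chosen by blast
    then have "wtot wage (greedy_choice B wage R U) \<le> wtot wage {y \<in> Y. R y x}"
      using assms(1-3) finite_subset[OF assms(2,1)] by (intro wtot_mono) auto
    ultimately show False using x by (auto simp: greedy_choice_def)
  qed
qed

lemma futil_le_of_ratio_dominance:
  assumes "finite C" "finite Y" "\<And>x. x \<in> C \<union> Y \<Longrightarrow> 0 < wage x" "\<And>c. c \<in> C \<Longrightarrow> 0 \<le> f c"
    and ratio: "\<And>c y. c \<in> C \<Longrightarrow> y \<in> Y - C \<Longrightarrow> f y / wage y \<le> f c / wage c"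
    and wage_le: "wtot wage Y \<le> wtot wage C"
  shows "futil f Y \<le> futil f C"
proof -
  \<comment> \<open>the 0 keeps the threshold nonnegative when Y \<subseteq> C\<close>
  define r where "r = Max (insert 0 ((\<lambda>y. f y / wage y) ` (Y - C)))"
  have "0 \<le> r" using assms(2) by (simp add: r_def)
  have below: "f y \<le> r * wage y" if "y \<in> Y - C" for y
  proof -
    have "f y / wage y \<le> r" using assms(2) that by (simp add: r_def)
    then show ?thesis using assms(3) that by (simp add: pos_divide_le_eq)
  qed
  have above: "r * wage c \<le> f c" if "c \<in> C" for c
  proof -
    have "0 \<le> f c / wage c" using assms(3)[of c] assms(4)[of c] that by simp
    then have "r \<le> f c / wage c"
      using assms(2) ratio that by (simp add: r_def)
    then show ?thesis using assms(3) that by (simp add: pos_le_divide_eq)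
  qed
  have "wtot wage (Y - C) \<le> wtot wage (C - Y)"
    using wage_le sum.Int_Diff[OF assms(2), of wage C] sum.Int_Diff[OF assms(1), of wage Y]
    by (simp add: wtot_def Int_commute)
  have "sum f (Y - C) \<le> r * wtot wage (Y - C)"
    unfolding wtot_def sum_distrib_left using below by (intro sum_mono) auto
  also have "\<dots> \<le> r * wtot wage (C - Y)"
    using \<open>wtot wage (Y - C) \<le> wtot wage (C - Y)\<close> \<open>0 \<le> r\<close> by (rule mult_left_mono)
  also have "\<dots> \<le> sum f (C - Y)"
    unfolding wtot_def sum_distrib_left using above by (intro sum_mono) auto
  finally have "sum f (Y - C) \<le> sum f (C - Y)" .
  then show ?thesis
    using sum.Int_Diff[OF assms(2), of f C] sum.Int_Diff[OF assms(1), of f Y]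
    by (simp add: futil_def Int_commute)
qed

locale greedy_hospital =
  fixes X :: "'a set" and B :: real and wage f :: "'a \<Rightarrow> real" and tb :: "'a \<Rightarrow> nat"
  assumes finite_X: "finite X"
    and wage_pos: "\<And>x. x \<in> X \<Longrightarrow> 0 < wage x"
    and f_nonneg: "\<And>x. x \<in> X \<Longrightarrow> 0 \<le> f x"
    and inj_tb: "inj_on tb X"
begin

abbreviation "Ch \<equiv> Ch_greedy B f wage tb"
abbreviation "R \<equiv> prec f wage tb"

lemma finite_subset_X: "S \<subseteq> X \<Longrightarrow> finite S"
  using finite_X by (rule finite_subset[rotated])

lemma wage_nonneg: "S \<subseteq> X \<Longrightarrow> x \<in> S \<Longrightarrow> 0 \<le> wage x"
  using wage_pos by force

lemma prec_total: "S \<subseteq> X \<Longrightarrow> x \<in> S \<Longrightarrow> y \<in> S \<Longrightarrow> x \<noteq> y \<Longrightarrow> R x y \<or> R y x"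
  using prec_total_on[OF inj_on_subset[OF inj_tb]] by blast

lemma Ch_eq: "S \<subseteq> X \<Longrightarrow> Ch S = greedy_choice B wage R S"
  and Ch_saturated: "S \<subseteq> X \<Longrightarrow> Ch S = S \<or> B \<le> wtot wage (Ch S)"
  using Ch_greedy_eq_greedy_choice[OF finite_subset_X inj_on_subset[OF inj_tb] wage_nonneg]
  by simp_all

lemma SUB_Ch: "SUB X Ch"
  unfolding SUB_def
proof (intro allI impI)
  fix Y' Y'' assume "Y'' \<subseteq> Y' \<and> Y' \<subseteq> X"
  then have Y': "Y' \<subseteq> X" and "Y'' \<subseteq> Y'" by auto
  then show "Y'' - Ch Y'' \<subseteq> Y' - Ch Y'"
    using greedy_choice_rejected_mono[OF finite_subset_X[OF Y'] _ wage_nonneg[OF Y']]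
      Ch_eq[OF Y'] Ch_eq[of Y''] by simp
qed

lemma IRC_Ch: "IRC X Ch"
  unfolding IRC_def
proof (intro allI impI)
  fix Y' Y'' assume h: "Y' \<subseteq> X \<and> Y'' \<subseteq> X - Y' \<and> Ch (Y' \<union> Y'') \<subseteq> Y'"
  then have U: "Y' \<union> Y'' \<subseteq> X" by blast
  have "greedy_choice B wage R Y' = greedy_choice B wage R (Y' \<union> Y'')"
    using h Ch_saturated[OF U] unfolding Ch_eq[OF U]
    by (intro greedy_choice_irrelevance[OF finite_subset_X[OF U] _ wage_nonneg[OF U]
          transp_prec prec_total[OF U]]) auto
  then show "Ch Y' = Ch (Y' \<union> Y'')" using h Ch_eq[OF U] Ch_eq[of Y'] by simp
qed

lemma COM_Ch: "COM X B f wage Ch"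
  unfolding COM_def
proof (intro allI impI)
  fix Y' Y'' assume h: "Y'' \<subseteq> Y' \<and> Y' \<subseteq> X \<and> wtot wage Y'' \<le> max B (wtot wage (Ch Y'))"
  then have Y': "Y' \<subseteq> X" by blast
  have C: "Ch Y' \<subseteq> Y'" unfolding Ch_eq[OF Y'] greedy_choice_def by blast
  have "wtot wage Y'' \<le> wtot wage (Ch Y')"
  proof (cases "Ch Y' = Y'")
    case True
    then show ?thesis using h wtot_mono[OF finite_subset_X[OF Y'] _ wage_nonneg[OF Y']] by simp
  next
    case False
    then have "B \<le> wtot wage (Ch Y')" using Ch_saturated[OF Y'] by blast
    then show ?thesis using h by simp
  qed
  moreover have "f y / wage y \<le> f c / wage c" if "c \<in> Ch Y'" "y \<in> Y'' - Ch Y'" for c y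
    using that h unfolding Ch_eq[OF Y']
    by (intro prec_ratio_le[where tb = tb]
        greedy_choice_chosen_before_rejected[OF finite_subset_X[OF Y'] wage_nonneg[OF Y']
          transp_prec prec_total[OF Y']]) auto
  ultimately show "futil f (Ch Y') \<ge> futil f Y''"
    using h C Y' wage_pos f_nonneg finite_subset[OF _ finite_subset_X[OF Y']]
    by (intro futil_le_of_ratio_dominance) (auto simp: subset_iff)
qed

end

theorem lemma3:
  fixes X :: "'a set" and B :: real and wage f :: "'a \<Rightarrow> real" and tb :: "'a \<Rightarrow> nat"
  assumes "finite X" and "B > 0"
    and "\<And>x. x \<in> X \<Longrightarrow> 0 < wage x \<and> wage x \<le> B"
    and "\<And>x. x \<in> X \<Longrightarrow> f x > 0"
    and "inj_on tb X"
  shows "SUB X (Ch_greedy B f wage tb) \<and> IRC X (Ch_greedy B f wage tb)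
       \<and> COM X B f wage (Ch_greedy B f wage tb)"
proof -
  interpret greedy_hospital X B wage f tb
    using assms by unfold_locales (auto simp: less_imp_le)
  show ?thesis using SUB_Ch IRC_Ch COM_Ch by blast
qed

end
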